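(* For all formulas $A,B$ of bilattice logic: if for every HBL $(\mathbb{L}_1,\mathbb{L}_2,\mathrm{n},\mathrm{p})$ and every assignment of the atoms $p_1$ to elements of $\mathbb{L}_1$ and $p_2$ to elements of $\mathbb{L}_2$ the interpretation of $t_1(A)$ is $\le_1$ the interpretation of $t_1(B)$, then $A\vDash_{\mathsf{B}}B$.
   Context: A heterogeneous bilattice (HBL) is a tuple $(\mathbb{L}_1,\mathbb{L}_2,\mathrm{n},\mathrm{p})$ where $\mathbb{L}_1=(L_1,\sqcap_1,\sqcup_1,0_1,1_1)$, $\mathbb{L}_2=(L_2,\sqcap_2,\sqcup_2,0_2,1_2)$ are bounded distributive lattices and $\mathrm{n}:\mathbb{L}_1\to\mathbb{L}_2$, $\mathrm{p}:\mathbb{L}_2\to\mathbb{L}_1$ are mutually inverse lattice isomorphisms; $\le_1$ is the order of $\mathbb{L}_1$. A bilattice is $(B,\le_t,\le_k,\neg)$ with $(B,\le_t)$ (operations $\wedge,\vee$) and $(B,\le_k)$ (operations $\otimes,\oplus$) lattices and $\neg$ satisfying: $a\le_tb\Rightarrow\neg b\le_t\neg a$, $a\le_kb\Rightarrow\neg a\le_k\neg b$, $\neg\neg a=a$. It is distributive if $x\circ(y\bullet z)=(x\circ y)\bullet(x\circ z)$ for all $\circ,\bullet\in\{\wedge,\vee,\otimes,\oplus\}$; bounds are $\mathtt{f},\mathtt{t}$ for $\le_t$ and $\bot,\top$ for $\le_k$. $\mathsf{B}$ is the class of bounded distributive bilattices. Formulas of bilattice logic: $A::=p\mid \mathtt{t}\mid\mathtt{f}\mid\top\mid\bot\mid\neg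 A\mid A\wedge A\mid A\vee A\mid A\otimes A\mid A\oplus A$, interpreted in bilattices in the obvious way. $A\vDash_{\mathsf{B}}C$ means: for every $\mathbb{B}\in\mathsf{B}$ and every assignment, if $A^{\mathbb{B}}\in F_{\mathtt{t}}$ then $C^{\mathbb{B}}\in F_{\mathtt{t}}$, where $F_{\mathtt{t}}=\{a\in B:\mathtt{t}\le_ka\}$. Translation into the two-sorted language (type-1 terms built from type-1 atoms $p_1$, $0_1,1_1,\sqcap_1,\sqcup_1$ and $\mathrm{p}$ applied to type-2 terms; type-2 terms analogously with $\mathrm{n}$): $t_1(p)=p_1$, $t_2(p)=p_2$; $t_1(\mathtt{t})=1_1,t_2(\mathtt{t})=0_2$; $t_1(\mathtt{f})=0_1,t_2(\mathtt{f})=1_2$; $t_1(\top)=1_1,t_2(\top)=1_2$; $t_1(\bot)=0_1,t_2(\bot)=0_2$; $t_1(A\wedge B)=t_1A\sqcap_1t_1B$, $t_2(A\wedge B)=t_2A\sqcup_2t_2B$; $t_1(A\vee B)=t_1A\sqcup_1t_1B$, $t_2(A\vee B)=t_2A\sqcap_2t_2B$; $t_1(A\otimes B)=t_1A\sqcap_1t_1B$, $t_2(A\otimes B)=t_2A\sqcap_2t_2B$; $t_1(A\oplus B)=t_1A\sqcup_1t_1B$, $t_2(A\oplus B)=t_2A\sqcup_2t_2B$; $t_1(\neg A)=\mathrm{p}\,t_2(A)$, $t_2(\neg A)=\mathrm{n}\,t_1(A)$. *)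

theory Defs
  imports Main
begin

definition lattice_on :: "'a set \<Rightarrow> ('a \<Rightarrow> 'a \<Rightarrow> 'a) \<Rightarrow> ('a \<Rightarrow> 'a \<Rightarrow> 'a) \<Rightarrow> bool" where
  "lattice_on L m j \<longleftrightarrow>
     (\<forall>x\<in>L. \<forall>y\<in>L. m x y \<in> L \<and> j x y \<in> L) \<and>
     (\<forall>x\<in>L. \<forall>y\<in>L. m x y = m y x \<and> j x y = j y x) \<and>
     (\<forall>x\<in>L. \<forall>y\<in>L. \<forall>z\<in>L. m x (m y z) = m (m x y) z \<and> j x (j y z) = j (j x y) z) \<and>
     (\<forall>x\<in>L. \<forall>y\<in>L. m x (j x y) = x \<and> j x (m x y) = x)"

definition lat_le :: "('a \<Rightarrow> 'a \<Rightarrow> 'a) \<Rightarrow> 'a \<Rightarrow> 'a \<Rightarrow> bool" where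
  "lat_le m x y \<longleftrightarrow> m x y = x"

definition bdl :: "'a set \<Rightarrow> ('a \<Rightarrow> 'a \<Rightarrow> 'a) \<Rightarrow> ('a \<Rightarrow> 'a \<Rightarrow> 'a) \<Rightarrow> 'a \<Rightarrow> 'a \<Rightarrow> bool" where
  "bdl L m j z u \<longleftrightarrow> lattice_on L m j \<and>
     (\<forall>x\<in>L. \<forall>y\<in>L. \<forall>w\<in>L. m x (j y w) = j (m x y) (m x w)) \<and>
     z \<in> L \<and> u \<in> L \<and> (\<forall>x\<in>L. lat_le m z x \<and> lat_le m x u)"

record 'a hbl =
  L1 :: "'a set"  meet1 :: "'a \<Rightarrow> 'a \<Rightarrow> 'a"  join1 :: "'a \<Rightarrow> 'a \<Rightarrow> 'a"  zero1 :: 'a  one1 :: 'a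
  L2 :: "'a set"  meet2 :: "'a \<Rightarrow> 'a \<Rightarrow> 'a"  join2 :: "'a \<Rightarrow> 'a \<Rightarrow> 'a"  zero2 :: 'a  one2 :: 'a
  nn :: "'a \<Rightarrow> 'a"
  pp :: "'a \<Rightarrow> 'a"

definition is_hbl :: "'a hbl \<Rightarrow> bool" where
  "is_hbl H \<longleftrightarrow>
     bdl (L1 H) (meet1 H) (join1 H) (zero1 H) (one1 H) \<and>
     bdl (L2 H) (meet2 H) (join2 H) (zero2 H) (one2 H) \<and>
     (\<forall>x\<in>L1 H. nn H x \<in> L2 H \<and> pp H (nn H x) = x) \<and>
     (\<forall>y\<in>L2 H. pp H y \<in> L1 H \<and> nn H (pp H y) = y) \<and>
     (\<forall>x\<in>L1 H. \<forall>y\<in>L1 H. nn H (meet1 H x y) = meet2 H (nn H x) (nn H y)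
                       \<and> nn H (join1 H x y) = join2 H (nn H x) (nn H y)) \<and>
     (\<forall>x\<in>L2 H. \<forall>y\<in>L2 H. pp H (meet2 H x y) = meet1 H (pp H x) (pp H y)
                       \<and> pp H (join2 H x y) = join1 H (pp H x) (pp H y))"

datatype 'v tm1 = Var1 'v | Zero1 | One1 | Meet1 "'v tm1" "'v tm1" | Join1 "'v tm1" "'v tm1"
                | P "'v tm2"
     and 'v tm2 = Var2 'v | Zero2 | One2 | Meet2 "'v tm2" "'v tm2" | Join2 "'v tm2" "'v tm2"
                | N "'v tm1"

fun I1 :: "'a hbl \<Rightarrow> ('v \<Rightarrow> 'a) \<Rightarrow> ('v \<Rightarrow> 'a) \<Rightarrow> 'v tm1 \<Rightarrow> 'a"
and I2 :: "'a hbl \<Rightarrow> ('v \<Rightarrow> 'a) \<Rightarrow> ('v \<Rightarrow> 'a) \<Rightarrow> 'v tm2 \<Rightarrow> 'a" where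
  "I1 H a1 a2 (Var1 v) = a1 v"
| "I1 H a1 a2 Zero1 = zero1 H"
| "I1 H a1 a2 One1 = one1 H"
| "I1 H a1 a2 (Meet1 s t) = meet1 H (I1 H a1 a2 s) (I1 H a1 a2 t)"
| "I1 H a1 a2 (Join1 s t) = join1 H (I1 H a1 a2 s) (I1 H a1 a2 t)"
| "I1 H a1 a2 (P s) = pp H (I2 H a1 a2 s)"
| "I2 H a1 a2 (Var2 v) = a2 v"
| "I2 H a1 a2 Zero2 = zero2 H"
| "I2 H a1 a2 One2 = one2 H"
| "I2 H a1 a2 (Meet2 s t) = meet2 H (I2 H a1 a2 s) (I2 H a1 a2 t)"
| "I2 H a1 a2 (Join2 s t) = join2 H (I2 H a1 a2 s) (I2 H a1 a2 t)"
| "I2 H a1 a2 (N s) = nn H (I1 H a1 a2 s)"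

datatype 'v fm = Atom 'v | TT | FF | Top | Bot | Neg "'v fm"
  | And "'v fm" "'v fm" | Or "'v fm" "'v fm" | Otimes "'v fm" "'v fm" | Oplus "'v fm" "'v fm"

fun t1 :: "'v fm \<Rightarrow> 'v tm1" and t2 :: "'v fm \<Rightarrow> 'v tm2" where
  "t1 (Atom p) = Var1 p"
| "t1 TT = One1"
| "t1 FF = Zero1"
| "t1 Top = One1"
| "t1 Bot = Zero1"
| "t1 (And A B) = Meet1 (t1 A) (t1 B)"
| "t1 (Or A B) = Join1 (t1 A) (t1 B)"
| "t1 (Otimes A B) = Meet1 (t1 A) (t1 B)"
| "t1 (Oplus A B) = Join1 (t1 A) (t1 B)"
| "t1 (Neg A) = P (t2 A)"
| "t2 (Atom p) = Var2 p"
| "t2 TT = Zero2"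
| "t2 FF = One2"
| "t2 Top = One2"
| "t2 Bot = Zero2"
| "t2 (And A B) = Join2 (t2 A) (t2 B)"
| "t2 (Or A B) = Meet2 (t2 A) (t2 B)"
| "t2 (Otimes A B) = Meet2 (t2 A) (t2 B)"
| "t2 (Oplus A B) = Join2 (t2 A) (t2 B)"
| "t2 (Neg A) = N (t1 A)"

record 'a bilat =
  bcar :: "'a set"
  tmeet :: "'a \<Rightarrow> 'a \<Rightarrow> 'a"  tjoin :: "'a \<Rightarrow> 'a \<Rightarrow> 'a"
  kmeet :: "'a \<Rightarrow> 'a \<Rightarrow> 'a"  kjoin :: "'a \<Rightarrow> 'a \<Rightarrow> 'a"
  bneg :: "'a \<Rightarrow> 'a"
  bf :: 'a  bt :: 'a  bbot :: 'a  btop :: 'a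

definition le_t :: "'a bilat \<Rightarrow> 'a \<Rightarrow> 'a \<Rightarrow> bool" where
  "le_t B x y \<longleftrightarrow> lat_le (tmeet B) x y"

definition le_k :: "'a bilat \<Rightarrow> 'a \<Rightarrow> 'a \<Rightarrow> bool" where
  "le_k B x y \<longleftrightarrow> lat_le (kmeet B) x y"

definition bd_bilattice :: "'a bilat \<Rightarrow> bool" where
  "bd_bilattice B \<longleftrightarrow>
     lattice_on (bcar B) (tmeet B) (tjoin B) \<and>
     lattice_on (bcar B) (kmeet B) (kjoin B) \<and>
     (\<forall>x\<in>bcar B. bneg B x \<in> bcar B \<and> bneg B (bneg B x) = x) \<and>
     (\<forall>x\<in>bcar B. \<forall>y\<in>bcar B. le_t B x y \<longrightarrow> le_t B (bneg B y) (bneg B x)) \<and>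
     (\<forall>x\<in>bcar B. \<forall>y\<in>bcar B. le_k B x y \<longrightarrow> le_k B (bneg B x) (bneg B y)) \<and>
     (\<forall>o1\<in>{tmeet B, tjoin B, kmeet B, kjoin B}. \<forall>o2\<in>{tmeet B, tjoin B, kmeet B, kjoin B}.
        \<forall>x\<in>bcar B. \<forall>y\<in>bcar B. \<forall>z\<in>bcar B. o1 x (o2 y z) = o2 (o1 x y) (o1 x z)) \<and>
     bf B \<in> bcar B \<and> bt B \<in> bcar B \<and> bbot B \<in> bcar B \<and> btop B \<in> bcar B \<and>
     (\<forall>x\<in>bcar B. le_t B (bf B) x \<and> le_t B x (bt B) \<and> le_k B (bbot B) x \<and> le_k B x (btop B))"

fun beval :: "'a bilat \<Rightarrow> ('v \<Rightarrow> 'a) \<Rightarrow> 'v fm \<Rightarrow> 'a" where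
  "beval B v (Atom p) = v p"
| "beval B v TT = bt B"
| "beval B v FF = bf B"
| "beval B v Top = btop B"
| "beval B v Bot = bbot B"
| "beval B v (Neg A) = bneg B (beval B v A)"
| "beval B v (And A C) = tmeet B (beval B v A) (beval B v C)"
| "beval B v (Or A C) = tjoin B (beval B v A) (beval B v C)"
| "beval B v (Otimes A C) = kmeet B (beval B v A) (beval B v C)"
| "beval B v (Oplus A C) = kjoin B (beval B v A) (beval B v C)"

text \<open>The designated filter F_t = {a. t \<le>_k a}.\<close>
definition in_Ft :: "'a bilat \<Rightarrow> 'a \<Rightarrow> bool" where
  "in_Ft B a \<longleftrightarrow> a \<in> bcar B \<and> le_k B (bt B) a"

end

theory Submission
  imports Defs
begin

text \<open>A bounded distributive bilattice is interlaced: the knowledge operations are monotone for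
  the truth order. Consequently, on the knowledge ideal below \<open>tt\<close> the truth and knowledge
  operations coincide, and likewise below \<open>ff\<close>. These two ideals, with the knowledge operations and
  the negation between them, form an HBL, and the projections \<open>a \<mapsto> a \<otimes> tt\<close>, \<open>a \<mapsto> a \<otimes> ff\<close>
  turn the value of a formula into the values of its two translations. Since \<open>a \<in> F\<^sub>t\<close> iff
  \<open>a \<otimes> tt = tt\<close>, the hypothesis for this HBL yields the consequence in the bilattice.\<close>

lemma lattice_on_dual: "lattice_on L meet join \<Longrightarrow> lattice_on L join meet"
  unfolding lattice_on_def by blast

locale lattice_carrier =
  fixes L :: "'a set" and meet join :: "'a \<Rightarrow> 'a \<Rightarrow> 'a"
  assumes lattice_on: "lattice_on L meet join"
begin

lemma meet_closed: "x \<in> L \<Longrightarrow> y \<in> L \<Longrightarrow> meet x y \<in> L"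
  and join_closed: "x \<in> L \<Longrightarrow> y \<in> L \<Longrightarrow> join x y \<in> L"
  and meet_commute: "x \<in> L \<Longrightarrow> y \<in> L \<Longrightarrow> meet x y = meet y x"
  and join_commute: "x \<in> L \<Longrightarrow> y \<in> L \<Longrightarrow> join x y = join y x"
  and meet_assoc: "x \<in> L \<Longrightarrow> y \<in> L \<Longrightarrow> z \<in> L \<Longrightarrow> meet x (meet y z) = meet (meet x y) z"
  and join_assoc: "x \<in> L \<Longrightarrow> y \<in> L \<Longrightarrow> z \<in> L \<Longrightarrow> join x (join y z) = join (join x y) z"
  and meet_join_absorb: "x \<in> L \<Longrightarrow> y \<in> L \<Longrightarrow> meet x (join x y) = x"
  and join_meet_absorb: "x \<in> L \<Longrightarrow> y \<in> L \<Longrightarrow> join x (meet x y) = x"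
  using lattice_on unfolding lattice_on_def by blast+

lemma meet_idem: "x \<in> L \<Longrightarrow> meet x x = x"
  using meet_join_absorb[of x "meet x x"] join_meet_absorb[of x x] meet_closed by simp

lemma join_idem: "x \<in> L \<Longrightarrow> join x x = x"
  using join_meet_absorb[of x "join x x"] meet_join_absorb[of x x] join_closed by simp

lemma le_iff_join: "x \<in> L \<Longrightarrow> y \<in> L \<Longrightarrow> lat_le meet x y \<longleftrightarrow> join x y = y"
  unfolding lat_le_def
  by (metis join_commute join_meet_absorb meet_commute meet_join_absorb)

lemma join_le_iff_le: "x \<in> L \<Longrightarrow> y \<in> L \<Longrightarrow> lat_le join x y \<longleftrightarrow> lat_le meet y x"
  using le_iff_join[of y x] join_commute[of x y] unfolding lat_le_def by simp

lemma le_refl: "x \<in> L \<Longrightarrow> lat_le meet x x"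
  unfolding lat_le_def by (rule meet_idem)

lemma le_trans:
  "x \<in> L \<Longrightarrow> y \<in> L \<Longrightarrow> z \<in> L \<Longrightarrow> lat_le meet x y \<Longrightarrow> lat_le meet y z \<Longrightarrow> lat_le meet x z"
  unfolding lat_le_def by (metis meet_assoc)

lemma le_antisym: "x \<in> L \<Longrightarrow> y \<in> L \<Longrightarrow> lat_le meet x y \<Longrightarrow> lat_le meet y x \<Longrightarrow> x = y"
  unfolding lat_le_def by (metis meet_commute)

lemma meet_le1: "x \<in> L \<Longrightarrow> y \<in> L \<Longrightarrow> lat_le meet (meet x y) x"
  unfolding lat_le_def by (metis meet_assoc meet_commute meet_idem)

lemma meet_le2: "x \<in> L \<Longrightarrow> y \<in> L \<Longrightarrow> lat_le meet (meet x y) y"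
  unfolding lat_le_def by (metis meet_assoc meet_idem)

lemma le_meetI:
  "x \<in> L \<Longrightarrow> y \<in> L \<Longrightarrow> z \<in> L \<Longrightarrow> lat_le meet x y \<Longrightarrow> lat_le meet x z \<Longrightarrow> lat_le meet x (meet y z)"
  unfolding lat_le_def by (metis meet_assoc)

lemma join_ge1: "x \<in> L \<Longrightarrow> y \<in> L \<Longrightarrow> lat_le meet x (join x y)"
  unfolding lat_le_def by (rule meet_join_absorb)

lemma join_ge2: "x \<in> L \<Longrightarrow> y \<in> L \<Longrightarrow> lat_le meet y (join x y)"
  unfolding lat_le_def by (metis meet_join_absorb join_commute)

lemma join_leI:
  "x \<in> L \<Longrightarrow> y \<in> L \<Longrightarrow> z \<in> L \<Longrightarrow> lat_le meet x z \<Longrightarrow> lat_le meet y z \<Longrightarrow> lat_le meet (join x y) z"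
  by (simp add: le_iff_join join_closed) (metis join_assoc)

lemma meet_right_self_distrib:
  assumes x: "x \<in> L" and y: "y \<in> L" and z: "z \<in> L"
  shows "meet (meet x y) z = meet (meet x z) (meet y z)"
proof -
  have yz: "meet y z \<in> L" using y z by (rule meet_closed)
  have "meet z (meet y z) = meet y (meet z z)"
    using meet_commute[OF z yz] meet_assoc[OF y z z] by simp
  then have "meet z (meet y z) = meet y z"
    using meet_idem[OF z] by simp
  then have "meet (meet x z) (meet y z) = meet x (meet y z)"
    using meet_assoc[OF x z yz] by simp
  then show ?thesis
    using meet_assoc[OF x y z] by simp
qed

context
  fixes f :: "'a \<Rightarrow> 'a"
  assumes closed: "\<And>x. x \<in> L \<Longrightarrow> f x \<in> L"
    and invol: "\<And>x. x \<in> L \<Longrightarrow> f (f x) = x"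
    and mono: "\<And>x y. x \<in> L \<Longrightarrow> y \<in> L \<Longrightarrow> lat_le meet x y \<Longrightarrow> lat_le meet (f x) (f y)"
begin

lemma mono_mirror: "x \<in> L \<Longrightarrow> y \<in> L \<Longrightarrow> lat_le meet (f x) y \<longleftrightarrow> lat_le meet x (f y)"
  using mono[of "f x" y] mono[of x "f y"] closed invol by auto

lemma monotone_involution_meet:
  assumes x: "x \<in> L" and y: "y \<in> L"
  shows "f (meet x y) = meet (f x) (f y)"
proof (rule le_antisym)
  have fx: "f x \<in> L" and fy: "f y \<in> L" using closed x y by auto
  show "lat_le meet (f (meet x y)) (meet (f x) (f y))"
    using x y fx fy by (intro le_meetI mono meet_le1 meet_le2 closed meet_closed)
  have "lat_le meet (f (meet (f x) (f y))) (meet x y)"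
    using x y fx fy
    by (intro le_meetI) (auto simp: mono_mirror meet_le1 meet_le2 closed meet_closed)
  then show "lat_le meet (meet (f x) (f y)) (f (meet x y))"
    using x y fx fy by (simp add: mono_mirror meet_closed)
qed (use x y closed meet_closed in auto)

lemma monotone_involution_join:
  assumes x: "x \<in> L" and y: "y \<in> L"
  shows "f (join x y) = join (f x) (f y)"
proof (rule le_antisym)
  have fx: "f x \<in> L" and fy: "f y \<in> L" using closed x y by auto
  show "lat_le meet (join (f x) (f y)) (f (join x y))"
    using x y fx fy by (intro join_leI mono join_ge1 join_ge2 closed join_closed)
  have "lat_le meet (join x y) (f (join (f x) (f y)))"
    using x y fx fy
    by (intro join_leI) (auto simp: mono_mirror[symmetric] join_ge1 join_ge2 closed join_closed)
  then show "lat_le meet (f (join x y)) (join (f x) (f y))"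
    using x y fx fy by (simp add: mono_mirror join_closed)
qed (use x y closed join_closed in auto)

end

lemma bdl_down_set:
  assumes distrib: "\<And>x y z. x \<in> L \<Longrightarrow> y \<in> L \<Longrightarrow> z \<in> L \<Longrightarrow>
      meet x (join y z) = join (meet x y) (meet x z)"
    and bot: "b \<in> L" "\<And>x. x \<in> L \<Longrightarrow> lat_le meet b x"
    and c: "c \<in> L"
  shows "bdl {x \<in> L. lat_le meet x c} meet join b c"
proof -
  let ?D = "{x \<in> L. lat_le meet x c}"
  have "lattice_on ?D meet join"
    unfolding lattice_on_def
  proof (intro conjI ballI)
    fix x y assume x: "x \<in> ?D" and y: "y \<in> ?D"
    then show "meet x y \<in> ?D" "join x y \<in> ?D"
      using c le_trans[OF meet_closed _ c meet_le1] join_leI by (auto simp: meet_closed join_closed)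
    show "meet x y = meet y x" "join x y = join y x" "meet x (join x y) = x" "join x (meet x y) = x"
      using x y by (simp_all add: meet_commute join_commute meet_join_absorb join_meet_absorb)
    fix z assume "z \<in> ?D"
    then show "meet x (meet y z) = meet (meet x y) z" "join x (join y z) = join (join x y) z"
      using x y by (simp_all add: meet_assoc join_assoc)
  qed
  then show ?thesis
    unfolding bdl_def using distrib bot c le_refl by simp
qed

end

locale distrib_bilattice =
  t: lattice_carrier B tm tj + k: lattice_carrier B km kj
  for B :: "'a set" and tm tj km kj :: "'a \<Rightarrow> 'a \<Rightarrow> 'a" +
  fixes neg :: "'a \<Rightarrow> 'a" and ff tt bot top :: 'a
  assumes neg_closed: "x \<in> B \<Longrightarrow> neg x \<in> B"
    and neg_neg: "x \<in> B \<Longrightarrow> neg (neg x) = x"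
    and neg_t_antimono: "x \<in> B \<Longrightarrow> y \<in> B \<Longrightarrow> lat_le tm x y \<Longrightarrow> lat_le tm (neg y) (neg x)"
    and neg_k_mono: "x \<in> B \<Longrightarrow> y \<in> B \<Longrightarrow> lat_le km x y \<Longrightarrow> lat_le km (neg x) (neg y)"
    and distrib: "o1 \<in> {tm, tj, km, kj} \<Longrightarrow> o2 \<in> {tm, tj, km, kj} \<Longrightarrow>
      x \<in> B \<Longrightarrow> y \<in> B \<Longrightarrow> z \<in> B \<Longrightarrow> o1 x (o2 y z) = o2 (o1 x y) (o1 x z)"
    and ff_closed: "ff \<in> B" and tt_closed: "tt \<in> B"
    and bot_closed: "bot \<in> B" and top_closed: "top \<in> B"
    and ff_le: "x \<in> B \<Longrightarrow> lat_le tm ff x" and le_tt: "x \<in> B \<Longrightarrow> lat_le tm x tt"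
    and bot_le: "x \<in> B \<Longrightarrow> lat_le km bot x" and le_top: "x \<in> B \<Longrightarrow> lat_le km x top"

lemma bd_bilattice_imp_distrib_bilattice:
  assumes "bd_bilattice B"
  shows "distrib_bilattice (bcar B) (tmeet B) (tjoin B) (kmeet B) (kjoin B)
           (bneg B) (bf B) (bt B) (bbot B) (btop B)"
  using assms unfolding bd_bilattice_def le_t_def le_k_def
  by unfold_locales (simp_all only: Ball_def; blast)+

context distrib_bilattice
begin

lemma km_t_mono:
  "c \<in> B \<Longrightarrow> x \<in> B \<Longrightarrow> y \<in> B \<Longrightarrow> lat_le tm x y \<Longrightarrow> lat_le tm (km c x) (km c y)"
  using distrib[of km tm c x y] unfolding lat_le_def by simp

lemma kj_t_mono:
  "c \<in> B \<Longrightarrow> x \<in> B \<Longrightarrow> y \<in> B \<Longrightarrow> lat_le tm x y \<Longrightarrow> lat_le tm (kj c x) (kj c y)"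
  using distrib[of kj tm c x y] unfolding lat_le_def by simp

lemma bot_t_le_below_tt:
  assumes y: "y \<in> B" and y_tt: "lat_le km y tt"
  shows "lat_le tm bot y"
proof -
  have "tm bot (km y tt) = km (tm bot y) (tm bot tt)"
    using distrib[of tm km bot y tt] y bot_closed tt_closed by simp
  also have "\<dots> = km (tm bot y) bot"
    using le_tt[OF bot_closed] unfolding lat_le_def by simp
  also have "\<dots> = bot"
    using bot_le[OF t.meet_closed[OF bot_closed y]] bot_closed t.meet_closed[OF bot_closed y]
    unfolding lat_le_def by (simp add: k.meet_commute)
  finally show ?thesis
    using y_tt unfolding lat_le_def by simp
qed

lemma tm_eq_km_below_tt:
  assumes x: "x \<in> B" and y: "y \<in> B" and x_tt: "lat_le km x tt" and y_tt: "lat_le km y tt"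
  shows "tm x y = km x y"
proof (rule t.le_antisym)
  let ?w = "tm x y"
  have w: "?w \<in> B" using x y by (rule t.meet_closed)
  have "lat_le tm ?w (km ?w x)"
    using km_t_mono[OF w w x t.meet_le1[OF x y]] k.meet_idem[OF w] by simp
  moreover have "lat_le tm (km ?w x) (km x y)"
    using km_t_mono[OF x w y t.meet_le2[OF x y]] k.meet_commute[OF w x] by simp
  ultimately show "lat_le tm ?w (km x y)"
    using w x y by (blast intro: t.le_trans k.meet_closed)
  have "lat_le tm (km x y) x"
    using km_t_mono[OF x y tt_closed le_tt[OF y]] x_tt unfolding lat_le_def by simp
  moreover have "lat_le tm (km x y) y"
    using km_t_mono[OF y x tt_closed le_tt[OF x]] y_tt k.meet_commute[OF x y]
    unfolding lat_le_def by simp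
  ultimately show "lat_le tm (km x y) ?w"
    using x y by (simp add: t.le_meetI k.meet_closed)
qed (use x y in \<open>simp_all add: t.meet_closed k.meet_closed\<close>)

lemma tj_eq_kj_below_tt:
  assumes x: "x \<in> B" and y: "y \<in> B" and x_tt: "lat_le km x tt" and y_tt: "lat_le km y tt"
  shows "tj x y = kj x y"
proof (rule t.le_antisym)
  let ?w = "tj x y"
  have w: "?w \<in> B" using x y by (rule t.join_closed)
  have kj_bot: "kj z bot = z" if "z \<in> B" for z
    using k.le_iff_join[OF bot_closed that] bot_le[OF that] k.join_commute[OF that bot_closed] by simp
  have "lat_le tm x (kj x y)"
    using kj_t_mono[OF x bot_closed y bot_t_le_below_tt[OF y y_tt]] kj_bot[OF x] by simp
  moreover have "lat_le tm y (kj x y)"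
    using kj_t_mono[OF y bot_closed x bot_t_le_below_tt[OF x x_tt]] kj_bot[OF y] k.join_commute[OF x y]
    by simp
  ultimately show "lat_le tm ?w (kj x y)"
    using x y by (simp add: t.join_leI k.join_closed)
  have "lat_le tm (kj x y) (kj x ?w)"
    using kj_t_mono[OF x y w t.join_ge2[OF x y]] .
  moreover have "lat_le tm (kj x ?w) ?w"
    using kj_t_mono[OF w x w t.join_ge1[OF x y]] k.join_idem[OF w] k.join_commute[OF w x] by simp
  ultimately show "lat_le tm (kj x y) ?w"
    using x y w by (blast intro: t.le_trans k.join_closed)
qed (use x y in \<open>simp_all add: t.join_closed k.join_closed\<close>)

lemma km_tt_ff: "km tt ff = bot"
proof (rule t.le_antisym)
  show "lat_le tm (km tt ff) bot"
    using km_t_mono[OF tt_closed ff_closed bot_closed ff_le[OF bot_closed]] bot_le[OF tt_closed]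
      k.meet_commute[OF tt_closed bot_closed] unfolding lat_le_def by simp
  show "lat_le tm bot (km tt ff)"
    using km_t_mono[OF ff_closed bot_closed tt_closed le_tt[OF bot_closed]] bot_le[OF ff_closed]
      k.meet_commute[OF ff_closed bot_closed] k.meet_commute[OF ff_closed tt_closed]
    unfolding lat_le_def by simp
qed (simp_all add: k.meet_closed tt_closed ff_closed bot_closed)

lemma neg_tt: "neg tt = ff"
proof (rule t.le_antisym)
  show "lat_le tm (neg tt) ff"
    using neg_t_antimono[OF neg_closed[OF ff_closed] tt_closed le_tt[OF neg_closed[OF ff_closed]]]
    by (simp add: neg_neg ff_closed)
qed (simp_all add: ff_le neg_closed tt_closed ff_closed)

lemma neg_ff: "neg ff = tt"
  using neg_neg[OF tt_closed] neg_tt by simp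

lemma neg_km: "x \<in> B \<Longrightarrow> y \<in> B \<Longrightarrow> neg (km x y) = km (neg x) (neg y)"
  by (rule k.monotone_involution_meet[OF neg_closed neg_neg neg_k_mono])

lemma neg_kj: "x \<in> B \<Longrightarrow> y \<in> B \<Longrightarrow> neg (kj x y) = kj (neg x) (neg y)"
  by (rule k.monotone_involution_join[OF neg_closed neg_neg neg_k_mono])

lemma km_tt_tm:
  assumes x: "x \<in> B" and y: "y \<in> B"
  shows "km (tm x y) tt = km (km x tt) (km y tt)"
proof -
  have "km (tm x y) tt = tm (km x tt) (km y tt)"
    using distrib[of km tm tt x y] x y tt_closed
    by (simp add: k.meet_commute t.meet_closed)
  also have "\<dots> = km (km x tt) (km y tt)"
    using x y tt_closed by (intro tm_eq_km_below_tt) (simp_all add: k.meet_closed k.meet_le2)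
  finally show ?thesis .
qed

lemma km_tt_tj:
  assumes x: "x \<in> B" and y: "y \<in> B"
  shows "km (tj x y) tt = kj (km x tt) (km y tt)"
proof -
  have "km (tj x y) tt = tj (km x tt) (km y tt)"
    using distrib[of km tj tt x y] x y tt_closed
    by (simp add: k.meet_commute t.join_closed)
  also have "\<dots> = kj (km x tt) (km y tt)"
    using x y tt_closed by (intro tj_eq_kj_below_tt) (simp_all add: k.meet_closed k.meet_le2)
  finally show ?thesis .
qed

end

text \<open>Reversing the truth order turns every fact about \<open>tt\<close> into one about \<open>ff\<close>.\<close>

sublocale distrib_bilattice \<subseteq> t_dual: distrib_bilattice B tj tm km kj neg tt ff bot top
proof -
  interpret t_dual_lattice: lattice_carrier B tj tm
    by unfold_locales (rule lattice_on_dual[OF t.lattice_on])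
  show "distrib_bilattice B tj tm km kj neg tt ff bot top"
  proof unfold_locales
    fix x y assume "x \<in> B" "y \<in> B" "lat_le tj x y"
    then show "lat_le tj (neg y) (neg x)"
      by (simp add: t.join_le_iff_le neg_closed neg_t_antimono)
  next
    fix o1 o2 x y z
    assume "o1 \<in> {tj, tm, km, kj}" "o2 \<in> {tj, tm, km, kj}" "x \<in> B" "y \<in> B" "z \<in> B"
    then show "o1 x (o2 y z) = o2 (o1 x y) (o1 x z)"
      by (intro distrib) (simp_all add: insert_commute)
  qed (simp_all add: t.join_le_iff_le neg_closed neg_neg neg_k_mono ff_closed tt_closed bot_closed
      top_closed ff_le le_tt bot_le le_top)
qed

context distrib_bilattice
begin

lemma km_ff_tt: "km ff tt = bot"
  using t_dual.km_tt_ff .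

lemma km_kj_distrib_right:
  "x \<in> B \<Longrightarrow> y \<in> B \<Longrightarrow> z \<in> B \<Longrightarrow> km (kj x y) z = kj (km x z) (km y z)"
  using distrib[of km kj z x y] by (simp add: k.meet_commute k.join_closed)

lemma km_tt_neg: "x \<in> B \<Longrightarrow> km (neg x) tt = neg (km x ff)"
  by (simp add: neg_km neg_ff ff_closed)

lemma tt_le_iff: "x \<in> B \<Longrightarrow> lat_le km tt x \<longleftrightarrow> km x tt = tt"
  unfolding lat_le_def by (simp add: k.meet_commute tt_closed)

lemma neg_le_ff_iff: "x \<in> B \<Longrightarrow> lat_le km (neg x) ff \<longleftrightarrow> lat_le km x tt"
  using neg_k_mono[of x tt] neg_k_mono[of "neg x" ff]
  by (auto simp: neg_closed neg_neg neg_tt neg_ff ff_closed tt_closed)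

end

definition hbl_of_bilattice :: "'a bilat \<Rightarrow> 'a hbl" where
  "hbl_of_bilattice B =
    \<lparr>L1 = {x \<in> bcar B. le_k B x (bt B)}, meet1 = kmeet B, join1 = kjoin B, zero1 = bbot B, one1 = bt B,
     L2 = {x \<in> bcar B. le_k B x (bf B)}, meet2 = kmeet B, join2 = kjoin B, zero2 = bbot B, one2 = bf B,
     nn = bneg B, pp = bneg B\<rparr>"

lemma is_hbl_hbl_of_bilattice:
  assumes "bd_bilattice B"
  shows "is_hbl (hbl_of_bilattice B)"
proof -
  interpret distrib_bilattice "bcar B" "tmeet B" "tjoin B" "kmeet B" "kjoin B" "bneg B"
      "bf B" "bt B" "bbot B" "btop B"
    using assms by (rule bd_bilattice_imp_distrib_bilattice)
  let ?D = "\<lambda>c. {x \<in> bcar B. le_k B x c}"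
  have "bdl (?D c) (kmeet B) (kjoin B) (bbot B) c" if "c \<in> bcar B" for c
    unfolding le_k_def using that
    by (intro k.bdl_down_set) (simp_all add: distrib bot_closed bot_le)
  moreover have "bneg B x \<in> ?D (bf B)" if "x \<in> ?D (bt B)" for x
    using that neg_le_ff_iff by (simp add: le_k_def neg_closed)
  moreover have "bneg B x \<in> ?D (bt B)" if "x \<in> ?D (bf B)" for x
    using that t_dual.neg_le_ff_iff by (simp add: le_k_def neg_closed)
  ultimately show ?thesis
    unfolding is_hbl_def hbl_of_bilattice_def hbl.simps
    by (simp add: ff_closed tt_closed neg_neg neg_km neg_kj)
qed

lemma beval_closed:
  assumes "bd_bilattice B" and "\<forall>p. v p \<in> bcar B"
  shows "beval B v A \<in> bcar B"
proof -
  interpret distrib_bilattice "bcar B" "tmeet B" "tjoin B" "kmeet B" "kjoin B" "bneg B"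
      "bf B" "bt B" "bbot B" "btop B"
    using assms(1) by (rule bd_bilattice_imp_distrib_bilattice)
  show ?thesis
    by (induction A) (simp_all add: assms(2) ff_closed tt_closed bot_closed top_closed neg_closed
        t.meet_closed t.join_closed k.meet_closed k.join_closed)
qed

lemma I_translation_hbl_of_bilattice:
  assumes B: "bd_bilattice B" and v: "\<forall>p. v p \<in> bcar B"
  defines "a1 \<equiv> \<lambda>p. kmeet B (v p) (bt B)" and "a2 \<equiv> \<lambda>p. kmeet B (v p) (bf B)"
  shows "I1 (hbl_of_bilattice B) a1 a2 (t1 A) = kmeet B (beval B v A) (bt B) \<and>
         I2 (hbl_of_bilattice B) a1 a2 (t2 A) = kmeet B (beval B v A) (bf B)"
proof -
  interpret distrib_bilattice "bcar B" "tmeet B" "tjoin B" "kmeet B" "kjoin B" "bneg B"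
      "bf B" "bt B" "bbot B" "btop B"
    using B by (rule bd_bilattice_imp_distrib_bilattice)
  note closed = beval_closed[OF B v]
  show ?thesis
  proof (induction A)
    case Top
    then show ?case
      using le_top[OF tt_closed] le_top[OF ff_closed] top_closed tt_closed ff_closed
      by (simp add: hbl_of_bilattice_def lat_le_def k.meet_commute)
  next
    case Bot
    then show ?case
      using bot_le[OF tt_closed] bot_le[OF ff_closed] by (simp add: hbl_of_bilattice_def lat_le_def)
  next
    case (Neg A)
    then show ?case
      using km_tt_neg[OF closed] t_dual.km_tt_neg[OF closed] by (simp add: hbl_of_bilattice_def)
  qed (simp_all add: hbl_of_bilattice_def a1_def a2_def closed tt_closed ff_closed k.meet_idem
      km_tt_ff km_ff_tt km_tt_tm km_tt_tj t_dual.km_tt_tm t_dual.km_tt_tj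
      k.meet_right_self_distrib km_kj_distrib_right)
qed

theorem mainTheorem6:
  fixes A C :: "'v fm"
  assumes "\<forall>(H :: 'a hbl) a1 a2. is_hbl H \<and> (\<forall>x. a1 x \<in> L1 H) \<and> (\<forall>x. a2 x \<in> L2 H) \<longrightarrow>
             lat_le (meet1 H) (I1 H a1 a2 (t1 A)) (I1 H a1 a2 (t1 C))"
  shows "\<forall>(B :: 'a bilat) v. bd_bilattice B \<and> (\<forall>x. v x \<in> bcar B) \<longrightarrow>
             in_Ft B (beval B v A) \<longrightarrow> in_Ft B (beval B v C)"
proof (intro allI impI)
  fix B :: "'a bilat" and v
  assume "bd_bilattice B \<and> (\<forall>x. v x \<in> bcar B)" and A_true: "in_Ft B (beval B v A)"
  then have B: "bd_bilattice B" and v: "\<forall>x. v x \<in> bcar B" by auto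
  interpret distrib_bilattice "bcar B" "tmeet B" "tjoin B" "kmeet B" "kjoin B" "bneg B"
      "bf B" "bt B" "bbot B" "btop B"
    using B by (rule bd_bilattice_imp_distrib_bilattice)
  let ?a = "beval B v A" and ?c = "beval B v C"
  have a: "?a \<in> bcar B" and c: "?c \<in> bcar B" using beval_closed[OF B v] by auto
  let ?H = "hbl_of_bilattice B"
    and ?a1 = "\<lambda>p. kmeet B (v p) (bt B)" and ?a2 = "\<lambda>p. kmeet B (v p) (bf B)"
  have "(\<forall>x. ?a1 x \<in> L1 ?H) \<and> (\<forall>x. ?a2 x \<in> L2 ?H)"
    using v by (simp add: hbl_of_bilattice_def le_k_def tt_closed ff_closed k.meet_closed k.meet_le2)
  then have "lat_le (meet1 ?H) (I1 ?H ?a1 ?a2 (t1 A)) (I1 ?H ?a1 ?a2 (t1 C))"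
    using assms is_hbl_hbl_of_bilattice[OF B] by simp
  then have "lat_le (kmeet B) (kmeet B ?a (bt B)) (kmeet B ?c (bt B))"
    using I_translation_hbl_of_bilattice[OF B v] by (simp add: hbl_of_bilattice_def)
  moreover have "kmeet B ?a (bt B) = bt B"
    using A_true a tt_le_iff unfolding in_Ft_def le_k_def by simp
  ultimately have "lat_le (kmeet B) (bt B) ?c"
    using k.le_trans[OF tt_closed k.meet_closed[OF c tt_closed] c _ k.meet_le1[OF c tt_closed]]
    by simp
  then show "in_Ft B ?c"
    using c unfolding in_Ft_def le_k_def by simp
qed

end
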